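(* Let $A\in\mathbb{R}^{m\times N}$ and $K\subset[N]$. The following are equivalent: (i) $\mathbb{1}_K$ and $\mathbb{1}-\mathbb{1}_K=\mathbb{1}_{K^c}$ are the unique solutions of $\min\|x\|_1$ subject to $Ax=b$, $x\in[0,1]^N$, with $b=A\mathbb{1}_K$ and $b=A\mathbb{1}_{K^c}$, respectively; (ii) $\ker(A)\cap H_K=\{0\}$; (iii) $\{x\in[0,1]^N: Ax=A\mathbb{1}_K\}=\{\mathbb{1}_K\}$; (iv) $\{x\in[0,1]^N: Ax=A\mathbb{1}_{K^c}\}=\{\mathbb{1}_{K^c}\}$.
   Context: $[N]=\{1,\dots,N\}$, $K^c=[N]\setminus K$, $\mathbb{1}\in\mathbb{R}^N$ is the all-ones vector and $\mathbb{1}_K$ the indicator vector of $K$. $H_K=\{w\in\mathbb{R}^N: w_i\le 0 \text{ for } i\in K,\ w_i\ge 0 \text{ for } i\notin K\}$. *)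

theory Defs
  imports "HOL-Analysis.Analysis"
begin

text \<open>Index set [N] is the finite type 'n (N = CARD('n)); vectors in R^N are real^'n,
  matrices in R^(m x N) are real^'n^'m.\<close>

definition ones :: "real^'n" where
  "ones = (\<chi> i. 1)"

definition indic_vec :: "'n set \<Rightarrow> real^'n" where
  "indic_vec K = (\<chi> i. if i \<in> K then 1 else 0)"

definition l1norm :: "real^'n \<Rightarrow> real" where
  "l1norm x = (\<Sum>i\<in>UNIV. \<bar>x $ i\<bar>)"

definition unit_cube :: "(real^'n) set" where
  "unit_cube = {x. \<forall>i. 0 \<le> x $ i \<and> x $ i \<le> 1}"

definition H_set :: "'n set \<Rightarrow> (real^'n) set" where
  "H_set K = {w. (\<forall>i\<in>K. w $ i \<le> 0) \<and> (\<forall>i. i \<notin> K \<longrightarrow> w $ i \<ge> 0)}"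

definition matrix_kernel :: "real^'n^'m \<Rightarrow> (real^'n) set" where
  "matrix_kernel A = {x. A *v x = 0}"

definition unique_l1_box_solution :: "real^'n^'m \<Rightarrow> real^'m \<Rightarrow> real^'n \<Rightarrow> bool" where
  "unique_l1_box_solution A b z \<longleftrightarrow>
     z \<in> unit_cube \<and> A *v z = b \<and>
     (\<forall>x. x \<in> unit_cube \<and> A *v x = b \<and> x \<noteq> z \<longrightarrow> l1norm z < l1norm x)"

end

theory Submission
  imports Defs
begin

text \<open>The points of \<open>[0,1]\<^sup>N\<close> with \<open>A x = A 1\<^sub>K\<close> are exactly the points \<open>1\<^sub>K + w\<close> with
  \<open>w \<in> ker A \<inter> H\<^sub>K\<close> and \<open>|w\<^sub>i| \<le> 1\<close>, and since \<open>ker A \<inter> H\<^sub>K\<close> is a cone every nonzero element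
  can be scaled into that box; so \<open>1\<^sub>K\<close> is the only feasible point iff \<open>ker A \<inter> H\<^sub>K = {0}\<close>.
  As \<open>H\<^sub>K\<^sub>c = -H\<^sub>K\<close>, the same condition governs \<open>1\<^sub>K\<^sub>c\<close>. For the \<open>\<ell>\<^sub>1\<close> problems, such a \<open>w\<close>
  changes \<open>\<parallel>1\<^sub>K\<parallel>\<^sub>1\<close> by \<open>\<Sum>\<^sub>i w\<^sub>i\<close>, while the feasible direction \<open>-w\<close> at \<open>1\<^sub>K\<^sub>c\<close> changes
  \<open>\<parallel>1\<^sub>K\<^sub>c\<parallel>\<^sub>1\<close> by \<open>-\<Sum>\<^sub>i w\<^sub>i\<close>; both norms cannot strictly increase.\<close>

lemma ones_minus_indic_vec: "ones - indic_vec K = indic_vec (- K)"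
  unfolding ones_def indic_vec_def by vector

lemma indic_vec_in_unit_cube: "indic_vec K \<in> unit_cube"
  unfolding unit_cube_def indic_vec_def by auto

lemma zero_in_H_set: "0 \<in> H_set K"
  unfolding H_set_def by auto

lemma scaleR_in_H_set: "w \<in> H_set K \<Longrightarrow> 0 \<le> c \<Longrightarrow> c *\<^sub>R w \<in> H_set K"
  unfolding H_set_def by (auto simp: mult_nonneg_nonpos)

lemma H_set_Compl_iff: "w \<in> H_set (- K) \<longleftrightarrow> - w \<in> H_set K"
  unfolding H_set_def by auto

lemma matrix_kernel_zero: "0 \<in> matrix_kernel A"
  unfolding matrix_kernel_def by simp

lemma matrix_kernel_scaleR: "w \<in> matrix_kernel A \<Longrightarrow> c *\<^sub>R w \<in> matrix_kernel A"
  unfolding matrix_kernel_def by (simp add: matrix_vector_mult_scaleR)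

lemma matrix_kernel_uminus: "- w \<in> matrix_kernel A \<longleftrightarrow> w \<in> matrix_kernel A"
  using matrix_vector_mult_diff_distrib[of A 0 w] unfolding matrix_kernel_def by auto

lemma unit_cube_diff_indic_vec_in_H_set: "x \<in> unit_cube \<Longrightarrow> x - indic_vec K \<in> H_set K"
  unfolding unit_cube_def H_set_def indic_vec_def by auto

lemma indic_vec_add_in_unit_cube:
  assumes "w \<in> H_set K" "\<forall>i. \<bar>w $ i\<bar> \<le> 1"
  shows "indic_vec K + w \<in> unit_cube"
proof -
  have "0 \<le> (indic_vec K + w) $ i \<and> (indic_vec K + w) $ i \<le> 1" for i
    using assms(2)[rule_format, of i] assms(1)
    unfolding H_set_def indic_vec_def by (cases "i \<in> K") auto
  then show ?thesis
    unfolding unit_cube_def by blast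
qed

lemma indic_vec_add_kernel_feasible:
  assumes "w \<in> matrix_kernel A" "w \<in> H_set K" "\<forall>i. \<bar>w $ i\<bar> \<le> 1"
  shows "indic_vec K + w \<in> {x \<in> unit_cube. A *v x = A *v indic_vec K}"
  using assms indic_vec_add_in_unit_cube[of w K]
  by (simp add: matrix_kernel_def matrix_vector_right_distrib)

lemma l1norm_indic_vec_add:
  assumes "w \<in> H_set K" "\<forall>i. \<bar>w $ i\<bar> \<le> 1"
  shows "l1norm (indic_vec K + w) = l1norm (indic_vec K) + (\<Sum>i\<in>UNIV. w $ i)"
proof -
  have "\<bar>(indic_vec K + w) $ i\<bar> = \<bar>indic_vec K $ i\<bar> + w $ i" for i
    using assms(2)[rule_format, of i] assms(1)
    unfolding H_set_def indic_vec_def by (cases "i \<in> K") auto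
  then show ?thesis
    unfolding l1norm_def by (simp add: sum.distrib)
qed

lemma kernel_inter_H_set_trivial_iff_in_box:
  fixes A :: "real^'n^'m"
  shows "matrix_kernel A \<inter> H_set K = {0} \<longleftrightarrow>
         (\<forall>v \<in> matrix_kernel A \<inter> H_set K. (\<forall>i. \<bar>v $ i\<bar> \<le> 1) \<longrightarrow> v = 0)"
proof
  assume box: "\<forall>v \<in> matrix_kernel A \<inter> H_set K. (\<forall>i. \<bar>v $ i\<bar> \<le> 1) \<longrightarrow> v = 0"
  have "w = 0" if w: "w \<in> matrix_kernel A" "w \<in> H_set K" for w
  proof (rule ccontr)
    assume "w \<noteq> 0"
    define v where "v = (1 / norm w) *\<^sub>R w"
    have "norm v = 1"
      using \<open>w \<noteq> 0\<close> by (simp add: v_def)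
    then have "\<forall>i. \<bar>v $ i\<bar> \<le> 1"
      by (metis component_le_norm_cart real_norm_def)
    moreover have "v \<in> matrix_kernel A \<inter> H_set K"
      using w by (simp add: v_def matrix_kernel_scaleR scaleR_in_H_set)
    ultimately have "v = 0"
      using box by blast
    with \<open>norm v = 1\<close> show False
      by simp
  qed
  then show "matrix_kernel A \<inter> H_set K = {0}"
    using matrix_kernel_zero zero_in_H_set by blast
qed auto

lemma kernel_inter_H_set_trivial_iff_unique_feasible:
  fixes A :: "real^'n^'m"
  shows "matrix_kernel A \<inter> H_set K = {0} \<longleftrightarrow>
         {x \<in> unit_cube. A *v x = A *v indic_vec K} = {indic_vec K}"
proof
  assume trivial: "matrix_kernel A \<inter> H_set K = {0}"
  have "x = indic_vec K" if "x \<in> unit_cube" "A *v x = A *v indic_vec K" for x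
  proof -
    have "x - indic_vec K \<in> matrix_kernel A"
      using that(2) by (simp add: matrix_kernel_def matrix_vector_mult_diff_distrib)
    moreover have "x - indic_vec K \<in> H_set K"
      using that(1) by (rule unit_cube_diff_indic_vec_in_H_set)
    ultimately have "x - indic_vec K = 0"
      using trivial by blast
    then show ?thesis
      by simp
  qed
  then show "{x \<in> unit_cube. A *v x = A *v indic_vec K} = {indic_vec K}"
    using indic_vec_in_unit_cube by auto
next
  assume unique: "{x \<in> unit_cube. A *v x = A *v indic_vec K} = {indic_vec K}"
  have "v = 0" if "v \<in> matrix_kernel A" "v \<in> H_set K" "\<forall>i. \<bar>v $ i\<bar> \<le> 1" for v
  proof -
    have "indic_vec K + v \<in> {indic_vec K}"
      using indic_vec_add_kernel_feasible[OF that] unique by simp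
    then show ?thesis
      by simp
  qed
  then show "matrix_kernel A \<inter> H_set K = {0}"
    unfolding kernel_inter_H_set_trivial_iff_in_box by blast
qed

lemma kernel_inter_H_set_Compl_trivial:
  assumes "matrix_kernel A \<inter> H_set K = {0}"
  shows "matrix_kernel A \<inter> H_set (- K) = {0}"
proof -
  have "w = 0" if "w \<in> matrix_kernel A" "w \<in> H_set (- K)" for w
  proof -
    have "- w \<in> matrix_kernel A \<inter> H_set K"
      using that by (simp add: matrix_kernel_uminus H_set_Compl_iff)
    then show ?thesis
      using assms by simp
  qed
  then show ?thesis
    using matrix_kernel_zero zero_in_H_set by blast
qed

lemma l1norm_increase_if_unique_l1_box_solution:
  assumes "unique_l1_box_solution A (A *v indic_vec K) (indic_vec K)"
    and "w \<in> matrix_kernel A" "w \<in> H_set K" "w \<noteq> 0" "\<forall>i. \<bar>w $ i\<bar> \<le> 1"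
  shows "0 < (\<Sum>i\<in>UNIV. w $ i)"
proof -
  have "indic_vec K + w \<in> unit_cube" "A *v (indic_vec K + w) = A *v indic_vec K"
    using indic_vec_add_kernel_feasible[OF assms(2,3,5)] by simp_all
  moreover have "indic_vec K + w \<noteq> indic_vec K"
    using assms(4) by simp
  ultimately have "l1norm (indic_vec K) < l1norm (indic_vec K + w)"
    using assms(1) unfolding unique_l1_box_solution_def by blast
  then show ?thesis
    using l1norm_indic_vec_add[OF assms(3,5)] by linarith
qed

lemma kernel_inter_H_set_trivial_if_unique_l1_box_solutions:
  fixes A :: "real^'n^'m"
  assumes "unique_l1_box_solution A (A *v indic_vec K) (indic_vec K)"
    and "unique_l1_box_solution A (A *v indic_vec (- K)) (indic_vec (- K))"
  shows "matrix_kernel A \<inter> H_set K = {0}"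
proof -
  have "v = 0" if v: "v \<in> matrix_kernel A" "v \<in> H_set K" "\<forall>i. \<bar>v $ i\<bar> \<le> 1" for v
  proof (rule ccontr)
    assume "v \<noteq> 0"
    have "0 < (\<Sum>i\<in>UNIV. v $ i)"
      using l1norm_increase_if_unique_l1_box_solution[OF assms(1) v(1,2) \<open>v \<noteq> 0\<close> v(3)] .
    moreover have "0 < (\<Sum>i\<in>UNIV. (- v) $ i)"
      by (rule l1norm_increase_if_unique_l1_box_solution[OF assms(2)])
        (use v \<open>v \<noteq> 0\<close> in \<open>simp_all add: matrix_kernel_uminus H_set_Compl_iff\<close>)
    ultimately show False
      by (simp add: sum_negf)
  qed
  then show ?thesis
    unfolding kernel_inter_H_set_trivial_iff_in_box by blast
qed

lemma unique_l1_box_solution_if_unique_feasible: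
  "{x \<in> unit_cube. A *v x = A *v z} = {z} \<Longrightarrow> unique_l1_box_solution A (A *v z) z"
  unfolding unique_l1_box_solution_def by blast

theorem proposition2p3:
  fixes A :: "real^'n^'m" and K :: "'n set"
  defines "P1 \<equiv> unique_l1_box_solution A (A *v indic_vec K) (indic_vec K) \<and>
                 unique_l1_box_solution A (A *v (ones - indic_vec K)) (ones - indic_vec K)"
      and "P2 \<equiv> matrix_kernel A \<inter> H_set K = {0}"
      and "P3 \<equiv> {x \<in> unit_cube. A *v x = A *v indic_vec K} = {indic_vec K}"
      and "P4 \<equiv> {x \<in> unit_cube. A *v x = A *v indic_vec (- K)} = {indic_vec (- K)}"
  shows "(P1 \<longleftrightarrow> P2) \<and> (P2 \<longleftrightarrow> P3) \<and> (P3 \<longleftrightarrow> P4)"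
proof -
  have P2_P3: "P2 \<longleftrightarrow> P3"
    unfolding P2_def P3_def by (rule kernel_inter_H_set_trivial_iff_unique_feasible)
  have "P2 \<longleftrightarrow> matrix_kernel A \<inter> H_set (- K) = {0}"
    unfolding P2_def
    using kernel_inter_H_set_Compl_trivial[of A K] kernel_inter_H_set_Compl_trivial[of A "- K"]
    by auto
  then have P2_P4: "P2 \<longleftrightarrow> P4"
    unfolding P4_def by (simp add: kernel_inter_H_set_trivial_iff_unique_feasible)
  have "P1 \<longleftrightarrow> P2"
  proof
    assume P1
    then show P2
      unfolding P1_def P2_def ones_minus_indic_vec
      by (elim conjE) (rule kernel_inter_H_set_trivial_if_unique_l1_box_solutions)
  next
    assume P2
    then have P3 P4
      using P2_P3 P2_P4 by blast+
    then show P1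
      unfolding P1_def P3_def P4_def ones_minus_indic_vec
      by (blast intro: unique_l1_box_solution_if_unique_feasible)
  qed
  with P2_P3 P2_P4 show ?thesis
    by blast
qed

end
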